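(* In the multi-hop VAoI network described in the context, where node $0$ uses the randomized stationary, uniform, or threshold update policy, the average VAoI at the destination node $N+1$ is \[ \bar\Delta_{N+1}=\bar\Delta_1+p_g\sum_{i=1}^N\frac1{\rho_i}, \] where $\bar\Delta_j$ denotes the long-run average VAoI at node $j$.
   Context: Time is slotted. A source generates a new version in each slot independently with probability $p_g\in(0,1)$, and its version index $V_S(t)$ increases by one at the start of the slot following each generation. Nodes $0,1,\dots,N+1$ form a line; node $0$ always holds the current source version, node $N+1$ is the destination, and nodes $1,\dots,N$ are relays. Each node stores only the latest version it has received. Link $i$ (from node $i$ to node $i+1$) delivers a transmission successfully with probability $\rho_i$, independently across slots and links, with $\rho_0=p_s\in(0,1)$. Each relay node $i\ge1$ transmits its stored version in every slot, so that $V_{i+1}(t+1)=V_i(t)$ if the transmission on link $i$ at slot $t$ succeeds and $V_{i+1}(t+1)=V_{i+1}(t)$ otherwise. The VAoI at node $j$ is $\Delta_j(t)=V_S(t)-V_j(t)$. Node $0$ decides in each slot whether to transmit ($a(t)=1$) or not to node $1$ via one of: the randomized stationary policy (i.i.d. $a(t)\sim$ Bernoulli$(\alpha)$, $0<\alpha\le1$); the uniform policy ($a(t)=1$ iff $t\in\{0,D,2D,\dots\}$ for an integer $D\ge1$); or the threshold policy ($a(t)=1$ iff $\Delta_1(t)\ge\Delta_T$). The long-run average VAoI at node $j$ is $\bar\Delta_j=\lim_{t\to\infty}\mathbb{E}[\Delta_j(t)]$ (equivalently the long-run time average of $\mathbb{E}[\Delta_j(t)]$). *)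

theory Defs
  imports "HOL-Probability.Probability"
begin

text \<open>Index set of the elementary Bernoulli random variables:
  Gen t     : the source generates a new version in slot t (prob p_g);
  Link i t  : a transmission on link i (node i to node i+1) in slot t succeeds (prob rho_i);
  Coin t    : the Bernoulli(alpha) decision of the randomized stationary policy in slot t.\<close>
datatype idx = Gen nat | Link nat nat | Coin nat

datatype policy = RandStat real | Uniform nat | Threshold nat

text \<open>Decision a(t) of node 0, given the outcome x of the elementary variables,
  the slot t and the current VAoI d1 = Delta_1(t) at node 1.\<close>
fun policy_action :: "policy \<Rightarrow> (idx \<Rightarrow> bool) \<Rightarrow> nat \<Rightarrow> nat \<Rightarrow> bool" where
  "policy_action (RandStat \<alpha>) x t d1 = x (Coin t)"
| "policy_action (Uniform D) x t d1 = (t mod D = 0)"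
| "policy_action (Threshold T) x t d1 = (d1 \<ge> T)"

text \<open>State at slot t: (V_S(t), V) where V j is the version stored at node j
  (V 0 = V_S(t) since node 0 always holds the current source version).
  All versions start at 0.\<close>
primrec vstate :: "policy \<Rightarrow> (idx \<Rightarrow> bool) \<Rightarrow> nat \<Rightarrow> nat \<times> (nat \<Rightarrow> nat)" where
  "vstate pol x 0 = (0, (\<lambda>j. 0))"
| "vstate pol x (Suc t) =
     (let s = fst (vstate pol x t); V = snd (vstate pol x t);
          a = policy_action pol x t (s - V 1);
          s' = s + (if x (Gen t) then 1 else 0)
      in (s', (\<lambda>j. if j = 0 then s'
                   else if (j = 1 \<longrightarrow> a) \<and> x (Link (j - 1) t) then V (j - 1)
                   else V j)))"

definition vaoi :: "policy \<Rightarrow> (idx \<Rightarrow> 'w \<Rightarrow> bool) \<Rightarrow> nat \<Rightarrow> nat \<Rightarrow> 'w \<Rightarrow> real" where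
  "vaoi pol X j t \<omega> =
     real (fst (vstate pol (\<lambda>i. X i \<omega>) t)) - real (snd (vstate pol (\<lambda>i. X i \<omega>) t) j)"

definition avg_vaoi :: "'w measure \<Rightarrow> policy \<Rightarrow> (idx \<Rightarrow> 'w \<Rightarrow> bool) \<Rightarrow> nat \<Rightarrow> nat \<Rightarrow> real" where
  "avg_vaoi M pol X j T = (\<Sum>t<T. integral\<^sup>L M (vaoi pol X j t)) / real T"

end

theory Submission
  imports Defs
begin

text \<open>
  Relay \<open>i\<close> copies the version of node \<open>i\<close> whenever link \<open>i\<close> succeeds, independently of the
  past, so the expected VAoI \<open>e\<^sub>i(t)\<close> at node \<open>i\<close> obeys
  \<open>e\<^sub>i\<^sub>+\<^sub>1(t+1) = (1 - \<rho>\<^sub>i) e\<^sub>i\<^sub>+\<^sub>1(t) + \<rho>\<^sub>i e\<^sub>i(t) + p\<^sub>g\<close>.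
  A linear recursion with contraction factor below 1 turns the Cesaro limit of its input into
  the Cesaro limit of its solution, which gives \<open>L\<^sub>i\<^sub>+\<^sub>1 = L\<^sub>i + p\<^sub>g / \<rho>\<^sub>i\<close> by induction on \<open>i\<close>.

  The real work is the existence of the Cesaro limit at node 1. Under the randomized policy
  (and the threshold policy with threshold 0) the same kind of linear recursion holds. Under the
  uniform policy, a periodically weighted multiple of \<open>e\<^sub>1(t)\<close> is a bounded potential that
  decreases by exactly \<open>e\<^sub>1(t)\<close> per slot up to a periodic input. Under the threshold policy, the
  first and second moments of \<open>min \<Delta>\<^sub>1 T\<close> are bounded potentials whose drifts pin down the Cesaro
  means of \<open>P(\<Delta>\<^sub>1 \<ge> T)\<close> and of \<open>E (min \<Delta>\<^sub>1 T)\<close>; the excess \<open>\<Delta>\<^sub>1 - min \<Delta>\<^sub>1 T\<close> then again follows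
  a contracting linear recursion.

  Expectations are computed exactly: the state at slot \<open>t\<close> is a function of finitely many
  elementary Bernoulli variables of earlier slots, hence independent of those of slot \<open>t\<close>.
\<close>

section \<open>Cesaro means\<close>

definition cesaro_mean :: "(nat \<Rightarrow> real) \<Rightarrow> nat \<Rightarrow> real" where
  "cesaro_mean x T = (\<Sum>t<T. x t) / real T"

lemma cesaro_mean_const: "cesaro_mean (\<lambda>t. c) \<longlonglongrightarrow> c"
proof (rule tendsto_eventually)
  show "\<forall>\<^sub>F T in sequentially. cesaro_mean (\<lambda>t. c) T = c"
    using eventually_gt_at_top[of 0] by eventually_elim (simp add: cesaro_mean_def)
qed

lemma cesaro_mean_add: "cesaro_mean (\<lambda>t. x t + y t) T = cesaro_mean x T + cesaro_mean y T"
  unfolding cesaro_mean_def by (simp add: sum.distrib add_divide_distrib)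

lemma tendsto_cesaro_mean_affine:
  assumes "cesaro_mean x \<longlonglongrightarrow> L"
  shows "cesaro_mean (\<lambda>t. a * x t + b) \<longlonglongrightarrow> a * L + b"
proof -
  have "cesaro_mean (\<lambda>t. a * x t + b) = (\<lambda>T. a * cesaro_mean x T + cesaro_mean (\<lambda>t. b) T)"
    by (rule ext) (simp add: cesaro_mean_add cesaro_mean_def sum_distrib_left)
  then show ?thesis
    by (simp add: tendsto_add[OF tendsto_mult[OF tendsto_const assms] cesaro_mean_const])
qed

lemma tendsto_bounded_divide_real:
  assumes "\<And>t. \<bar>w t\<bar> \<le> B"
  shows "(\<lambda>T. w T / real T) \<longlonglongrightarrow> 0"
proof (rule Lim_null_comparison)
  show "\<forall>\<^sub>F T in sequentially. norm (w T / real T) \<le> B / real T"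
    by (intro always_eventually allI) (simp add: abs_divide divide_right_mono assms)
  show "(\<lambda>T. B / real T) \<longlonglongrightarrow> 0"
    by (intro tendsto_divide_0[OF tendsto_const] filterlim_at_top_imp_at_infinity
        filterlim_real_sequentially)
qed

lemma cesaro_mean_tendsto_of_bounded_potential:
  assumes w: "\<And>t. w (Suc t) = w t + y t + d * x t" and d: "d \<noteq> 0"
    and B: "\<And>t. \<bar>w t\<bar> \<le> B" and y: "cesaro_mean y \<longlonglongrightarrow> Ly"
  shows "cesaro_mean x \<longlonglongrightarrow> - Ly / d"
proof -
  have tel: "w T - w 0 = (\<Sum>t<T. y t) + d * (\<Sum>t<T. x t)" for T
  proof -
    have "w T - w 0 = (\<Sum>t<T. w (Suc t) - w t)"
      by (rule sum_lessThan_telescope[symmetric])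
    also have "\<dots> = (\<Sum>t<T. y t) + d * (\<Sum>t<T. x t)"
      by (simp add: w sum.distrib sum_distrib_left)
    finally show ?thesis .
  qed
  have eq: "cesaro_mean x T = ((w T - w 0) / real T - cesaro_mean y T) / d" for T
  proof -
    have "(\<Sum>t<T. x t) = ((w T - w 0) - (\<Sum>t<T. y t)) / d"
      using tel[of T] d by (simp add: field_simps)
    then show ?thesis
      using d by (simp add: cesaro_mean_def diff_divide_distrib mult.commute)
  qed
  have "\<bar>w T - w 0\<bar> \<le> 2 * B" for T
    using B[of T] B[of 0] by linarith
  then have "(\<lambda>T. (w T - w 0) / real T) \<longlonglongrightarrow> 0"
    by (rule tendsto_bounded_divide_real)
  then have "(\<lambda>T. ((w T - w 0) / real T - cesaro_mean y T) / d) \<longlonglongrightarrow> (0 - Ly) / d"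
    by (intro tendsto_intros y d)
  then show ?thesis unfolding eq[abs_def] by simp
qed

lemma tendsto_divide_Suc_of_cesaro_mean:
  assumes "cesaro_mean u \<longlonglongrightarrow> U"
  shows "(\<lambda>T. u T / (real T + 1)) \<longlonglongrightarrow> 0"
proof -
  have eq: "u T / (real T + 1) = cesaro_mean u (Suc T) - cesaro_mean u T * (real T / (real T + 1))"
    for T
  proof (cases "T = 0")
    case False
    have "cesaro_mean u T * (real T / (real T + 1)) = (\<Sum>t<T. u t) / (real T + 1)"
      using False by (simp add: cesaro_mean_def)
    then show ?thesis by (simp add: cesaro_mean_def add_divide_distrib add.commute)
  qed (simp add: cesaro_mean_def)
  have "(\<lambda>T. real T / (real T + 1)) \<longlonglongrightarrow> 1"
    using LIMSEQ_n_over_Suc_n by (simp add: add.commute)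
  then have "(\<lambda>T. cesaro_mean u (Suc T) - cesaro_mean u T * (real T / (real T + 1)))
      \<longlonglongrightarrow> U - U * 1"
    by (intro tendsto_intros assms[THEN LIMSEQ_Suc] assms)
  then show ?thesis unfolding eq by simp
qed

lemma linear_recurrence_abs_le:
  assumes a: "0 \<le> a" "a < 1" and f0: "f 0 = 0" and f: "\<And>t. f (Suc t) = a * f t + u t"
    and \<epsilon>: "0 \<le> \<epsilon>" and C: "0 \<le> C" and u: "\<And>t. \<bar>u t\<bar> \<le> \<epsilon> * (real t + 1) + C"
  shows "\<bar>f t\<bar> \<le> (\<epsilon> * (real t + 1) + C) / (1 - a)"
proof (induction t)
  case 0
  then show ?case using f0 \<epsilon> C a by simp
next
  case (Suc t)
  have "\<bar>f (Suc t)\<bar> \<le> a * \<bar>f t\<bar> + \<bar>u t\<bar>"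
    unfolding f using a abs_triangle_ineq[of "a * f t" "u t"] by (simp add: abs_mult)
  also have "\<dots> \<le> a * ((\<epsilon> * (real t + 1) + C) / (1 - a)) + (\<epsilon> * (real t + 1) + C)"
    using Suc u[of t] a by (intro add_mono mult_left_mono) auto
  also have "\<dots> = (\<epsilon> * (real t + 1) + C) / (1 - a)"
    using a by (simp add: field_simps)
  also have "\<dots> \<le> (\<epsilon> * (real (Suc t) + 1) + C) / (1 - a)"
    using a \<epsilon> by (intro divide_right_mono add_mono mult_left_mono) auto
  finally show ?case .
qed

lemma linear_recurrence_divide_tendsto_0:
  assumes u: "(\<lambda>T. u T / (real T + 1)) \<longlonglongrightarrow> 0"
    and a: "0 \<le> a" "a < 1" and f0: "f 0 = 0" and f: "\<And>t. f (Suc t) = a * f t + u t"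
  shows "(\<lambda>T. f T / real T) \<longlonglongrightarrow> 0"
proof (rule LIMSEQ_I)
  fix r :: real assume r: "0 < r"
  define \<epsilon> where "\<epsilon> = r * (1 - a) / 4"
  have \<epsilon>: "0 < \<epsilon>" using r a by (simp add: \<epsilon>_def)
  obtain N where N: "\<And>t. t \<ge> N \<Longrightarrow> \<bar>u t\<bar> / (real t + 1) < \<epsilon>"
    using LIMSEQ_D[OF u \<epsilon>] by (auto simp: abs_divide)
  define C where "C = (\<Sum>t<N. \<bar>u t\<bar>)"
  have C: "0 \<le> C" unfolding C_def by (auto intro: sum_nonneg)
  have "\<bar>u t\<bar> \<le> \<epsilon> * (real t + 1) + C" for t
  proof (cases "t \<ge> N")
    case True
    then show ?thesis using N[of t] C by (simp add: field_simps)
  next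
    case False
    then have "\<bar>u t\<bar> \<le> C" unfolding C_def by (intro member_le_sum) auto
    moreover have "0 \<le> \<epsilon> * (real t + 1)" using \<epsilon> by simp
    ultimately show ?thesis by linarith
  qed
  note bound = linear_recurrence_abs_le[OF a f0 f less_imp_le[OF \<epsilon>] C this]
  show "\<exists>n0. \<forall>n\<ge>n0. norm (f n / real n - 0) < r"
  proof (intro exI allI impI)
    fix n assume n: "n \<ge> max 1 (nat \<lceil>C / \<epsilon>\<rceil>)"
    then have n1: "1 \<le> real n" and "C / \<epsilon> \<le> real n" by linarith+
    then have "C \<le> \<epsilon> * real n" and "\<epsilon> \<le> \<epsilon> * real n"
      using \<epsilon> by (simp_all add: field_simps)
    then have "\<epsilon> * (real n + 1) + C \<le> 3 * \<epsilon> * real n"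
      by (simp add: algebra_simps)
    then have "(\<epsilon> * (real n + 1) + C) / (1 - a) \<le> 3 * \<epsilon> * real n / (1 - a)"
      using a by (intro divide_right_mono) auto
    with bound[of n] have "\<bar>f n\<bar> \<le> 3 * \<epsilon> / (1 - a) * real n"
      by simp
    then have "\<bar>f n\<bar> / real n \<le> 3 * \<epsilon> / (1 - a)"
      using n1 by (simp add: divide_le_eq)
    also have "\<dots> = 3 * r / 4" using a by (simp add: \<epsilon>_def field_simps)
    also have "\<dots> < r" using r by simp
    finally show "norm (f n / real n - 0) < r" by (simp add: abs_divide)
  qed
qed

lemma cesaro_mean_linear_recurrence:
  assumes a: "0 \<le> a" "a < 1" and f0: "f 0 = 0" and f: "\<And>t. f (Suc t) = a * f t + u t"
    and u: "cesaro_mean u \<longlonglongrightarrow> U"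
  shows "cesaro_mean f \<longlonglongrightarrow> U / (1 - a)"
proof -
  have "(\<Sum>t<T. f t) + f T = a * (\<Sum>t<T. f t) + (\<Sum>t<T. u t)" for T
  proof (induction T)
    case (Suc T)
    then show ?case unfolding sum.lessThan_Suc distrib_left f by linarith
  qed (simp add: f0)
  then have "(\<Sum>t<T. f t) = ((\<Sum>t<T. u t) - f T) / (1 - a)" for T
    using a by (simp add: field_simps)
  then have eq: "cesaro_mean f T = (cesaro_mean u T - f T / real T) / (1 - a)" for T
    using a by (simp add: cesaro_mean_def diff_divide_distrib mult.commute)
  have "(\<lambda>T. (cesaro_mean u T - f T / real T) / (1 - a)) \<longlonglongrightarrow> (U - 0) / (1 - a)"
    using a by (intro tendsto_intros u linear_recurrence_divide_tendsto_0[OF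
        tendsto_divide_Suc_of_cesaro_mean[OF u] a f0 f]) auto
  then show ?thesis unfolding eq[abs_def] by simp
qed

lemma cesaro_mean_periodic:
  assumes D: "1 \<le> D"
  shows "cesaro_mean (\<lambda>t. h (t mod D)) \<longlonglongrightarrow> (\<Sum>r<D. h r) / real D"
proof -
  define H where "H = (\<Sum>r<D. h r) / real D"
  define w where "w t = (\<Sum>s<t. h (s mod D) - H)" for t
  have period: "(\<Sum>k<D. h ((t + k) mod D)) = (\<Sum>r<D. h r)" for t
  proof (induction t)
    case (Suc t)
    have "(\<Sum>k<Suc D. h ((t + k) mod D)) = h (t mod D) + (\<Sum>k<D. h ((Suc t + k) mod D))"
      by (subst sum.lessThan_Suc_shift) simp
    then show ?case using Suc by simp
  qed simp
  have w_period: "w (t + D) = w t" for t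
  proof -
    have "(\<Sum>s<t + k. f s) = (\<Sum>s<t. f s) + (\<Sum>j<k. f (t + j))" for k and f :: "nat \<Rightarrow> real"
      by (induction k) (simp_all add: add.assoc)
    then have "w (t + D) = w t + (\<Sum>k<D. h ((t + k) mod D) - H)"
      unfolding w_def by blast
    then show ?thesis
      using period[of t] D by (simp add: sum_subtractf H_def)
  qed
  have w_mod: "w t = w (t mod D)" for t
  proof (induction t rule: less_induct)
    case (less t)
    show ?case
    proof (cases "t < D")
      case False
      then have "w t = w (t - D)"
        using w_period[of "t - D"] by simp
      also have "\<dots> = w ((t - D) mod D)"
        using less[of "t - D"] False D by simp
      finally show ?thesis
        using False by (simp add: le_mod_geq)
    qed simp
  qed
  define B where "B = (\<Sum>s<D. \<bar>h (s mod D) - H\<bar>)"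
  have w_bound: "\<bar>w t\<bar> \<le> B" for t
  proof -
    have "\<bar>w (t mod D)\<bar> \<le> (\<Sum>s<t mod D. \<bar>h (s mod D) - H\<bar>)"
      unfolding w_def by (rule sum_abs)
    also have "\<dots> \<le> B"
      unfolding B_def using D by (intro sum_mono2) auto
    finally show ?thesis using w_mod[of t] by simp
  qed
  have "cesaro_mean (\<lambda>t. h (t mod D)) \<longlonglongrightarrow> - (- H) / 1"
    by (rule cesaro_mean_tendsto_of_bounded_potential[where w = w and y = "\<lambda>_. - H",
          OF _ _ w_bound cesaro_mean_const]) (simp_all add: w_def)
  then show ?thesis by (simp add: H_def)
qed

text \<open>With these weights, \<open>reset_weight D \<rho> (t mod D) * e t\<close> decreases by exactly \<open>e t\<close> per slot,
  up to a bounded periodic input, when \<open>e\<close> grows by a constant and is damped by \<open>1 - \<rho>\<close> once per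
  period \<open>D\<close>.\<close>
definition reset_weight :: "nat \<Rightarrow> real \<Rightarrow> nat \<Rightarrow> real" where
  "reset_weight D \<rho> r = real D / \<rho> + 1 - (if r = 0 then real D else real r)"

lemma reset_weight_bounds:
  assumes "0 < \<rho>" "\<rho> \<le> 1" "r < D"
  shows "1 \<le> reset_weight D \<rho> r \<and> reset_weight D \<rho> r \<le> real D / \<rho>"
proof -
  have "real D \<le> real D / \<rho>"
    using assms by (simp add: field_simps mult_left_le)
  then show ?thesis
    using assms by (auto simp: reset_weight_def)
qed

lemma reset_weight_step:
  assumes "0 < \<rho>" "r < D"
  shows "reset_weight D \<rho> (Suc r mod D) * (if r = 0 then 1 - \<rho> else 1) = reset_weight D \<rho> r - 1"
proof (cases "r = 0")
  case True
  then have "reset_weight D \<rho> (Suc r mod D) = real D / \<rho>"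
    using assms by (cases "D = 1") (simp_all add: reset_weight_def)
  with True show ?thesis
    using assms by (simp add: reset_weight_def field_simps)
next
  case False
  then show ?thesis
    using assms by (cases "Suc r = D") (simp_all add: reset_weight_def)
qed

lemma convergent_cesaro_mean_periodic_reset:
  fixes D :: nat and \<rho> b :: real
  assumes D: "1 \<le> D" and \<rho>: "0 < \<rho>" "\<rho> \<le> 1" and b: "0 \<le> b" and e0: "e 0 = 0"
    and e: "\<And>t. e (Suc t) = b + (if t mod D = 0 then 1 - \<rho> else 1) * e t"
  shows "\<exists>L. cesaro_mean e \<longlonglongrightarrow> L"
proof -
  have e_nonneg: "0 \<le> e t" for t
    by (induction t) (use e0 b \<rho> in \<open>simp_all add: e\<close>)
  define C where "C = real D / \<rho>"
  have C: "1 \<le> C"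
    using reset_weight_bounds[OF \<rho>, of 0 D] D by (simp add: C_def)
  define c where "c = reset_weight D \<rho>"
  have c: "1 \<le> c (t mod D)" "c (t mod D) \<le> C" for t
    using reset_weight_bounds[OF \<rho>, of "t mod D" D] D by (simp_all add: c_def C_def)
  define w where "w t = c (t mod D) * e t" for t
  define y where "y t = b * c (Suc t mod D)" for t
  have w_step: "w (Suc t) = w t + y t + (-1) * e t" for t
  proof -
    have "w (Suc t) = y t + c (Suc t mod D) * (if t mod D = 0 then 1 - \<rho> else 1) * e t"
      by (simp add: w_def y_def e distrib_left mult.assoc)
    also have "c (Suc t mod D) * (if t mod D = 0 then 1 - \<rho> else 1) = c (t mod D) - 1"
      using reset_weight_step[OF \<rho>(1), of "t mod D" D] D by (simp add: c_def mod_Suc_eq)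
    finally show ?thesis
      by (simp add: w_def algebra_simps)
  qed
  have "0 \<le> w t \<and> w t \<le> C * C * b" for t
  proof (induction t)
    case 0
    then show ?case using C b by (simp add: w_def e0)
  next
    case (Suc t)
    have "w t \<le> C * e t"
      unfolding w_def using c(2) e_nonneg[of t] by (rule mult_right_mono)
    then have "w t / C \<le> e t"
      using C by (simp add: divide_le_eq mult.commute)
    moreover have "y t \<le> b * C"
      unfolding y_def using c(2)[of "Suc t"] b by (simp add: mult_left_mono mod_Suc_eq)
    ultimately have "w (Suc t) \<le> w t * (1 - 1 / C) + C * b"
      using w_step[of t] by (simp add: algebra_simps)
    also have "\<dots> \<le> C * C * b * (1 - 1 / C) + C * b"
      using Suc C b by (intro add_mono mult_right_mono) (auto simp: field_simps)
    also have "\<dots> = C * C * b"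
      using C by (simp add: field_simps)
    finally show ?case
      using c(1)[of "Suc t"] e_nonneg[of "Suc t"] by (simp add: w_def)
  qed
  then have "\<bar>w t\<bar> \<le> C * C * b" for t
    by auto
  moreover have "cesaro_mean y \<longlonglongrightarrow> (\<Sum>r<D. b * c (Suc r mod D)) / real D"
    using cesaro_mean_periodic[OF D, of "\<lambda>r. b * c (Suc r mod D)"]
    by (simp add: y_def[abs_def] mod_Suc_eq)
  ultimately have "cesaro_mean e \<longlonglongrightarrow> - ((\<Sum>r<D. b * c (Suc r mod D)) / real D) / - 1"
    by (intro cesaro_mean_tendsto_of_bounded_potential[where x = e, OF w_step]) auto
  then show ?thesis by blast
qed


section \<open>The slot dynamics\<close>

definition history :: "nat \<Rightarrow> nat \<Rightarrow> idx set" where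
  "history t n = Gen ` {..<t} \<union> Coin ` {..<t} \<union> (\<lambda>(i, u). Link i u) ` ({..n} \<times> {..<t})"

lemma finite_history: "finite (history t n)"
  unfolding history_def by auto

lemma history_notin: "Gen t \<notin> history t n" "Coin t \<notin> history t n" "Link i t \<notin> history t n"
  unfolding history_def by auto

lemma history_mono: "history t n \<subseteq> history (Suc t) n"
  unfolding history_def by auto

lemma history_Suc_in:
  "Gen t \<in> history (Suc t) n" "Coin t \<in> history (Suc t) n" "i \<le> n \<Longrightarrow> Link i t \<in> history (Suc t) n"
  unfolding history_def by auto

lemma vstate_version_le_source: "snd (vstate pol x t) j \<le> fst (vstate pol x t)"
proof (induction t arbitrary: j)
  case (Suc t)
  have "snd (vstate pol x t) (j - 1) \<le> fst (vstate pol x t)"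
    using Suc by blast
  then show ?case
    using Suc[of j] by (auto simp: Let_def)
qed simp

lemma vstate_node_0: "snd (vstate pol x t) 0 = fst (vstate pol x t)"
  by (cases t) (auto simp: Let_def)

lemma policy_action_cong:
  "x (Coin t) = y (Coin t) \<Longrightarrow> policy_action pol x t d = policy_action pol y t d"
  by (cases pol) auto

lemma vstate_cong_history:
  assumes "\<forall>i\<in>history t n. x i = y i"
  shows "fst (vstate pol x t) = fst (vstate pol y t) \<and>
    (\<forall>j\<le>n. snd (vstate pol x t) j = snd (vstate pol y t) j)"
  using assms
proof (induction t)
  case (Suc t)
  then have IH: "fst (vstate pol x t) = fst (vstate pol y t)"
      "\<And>j. j \<le> n \<Longrightarrow> snd (vstate pol x t) j = snd (vstate pol y t) j"
    using history_mono by blast+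
  have Gen: "x (Gen t) = y (Gen t)" and Link: "\<And>i. i \<le> n \<Longrightarrow> x (Link i t) = y (Link i t)"
    and action: "policy_action pol x t d = policy_action pol y t d" for d
    using Suc.prems history_Suc_in policy_action_cong by blast+
  have "snd (vstate pol x (Suc t)) j = snd (vstate pol y (Suc t)) j" if "j \<le> n" for j
    using that IH Gen Link[of "j - 1"] action by (simp add: Let_def)
  moreover have "fst (vstate pol x (Suc t)) = fst (vstate pol y (Suc t))"
    using IH Gen by (simp add: Let_def)
  ultimately show ?case by blast
qed simp

definition vaoi_nat :: "policy \<Rightarrow> (idx \<Rightarrow> bool) \<Rightarrow> nat \<Rightarrow> nat \<Rightarrow> nat" where
  "vaoi_nat pol x j t = fst (vstate pol x t) - snd (vstate pol x t) j"

lemma vaoi_eq_vaoi_nat: "vaoi pol X j t \<omega> = real (vaoi_nat pol (\<lambda>i. X i \<omega>) j t)"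
  unfolding vaoi_def vaoi_nat_def
  using vstate_version_le_source[of pol "\<lambda>i. X i \<omega>" t j] by (simp add: of_nat_diff)

lemma vaoi_nat_cong_history:
  "\<forall>i\<in>history t n. x i = y i \<Longrightarrow> j \<le> n \<Longrightarrow> vaoi_nat pol x j t = vaoi_nat pol y j t"
  using vstate_cong_history unfolding vaoi_nat_def by metis

lemma vaoi_nat_relay_Suc:
  assumes "2 \<le> j"
  shows "vaoi_nat pol x j (Suc t) = of_bool (x (Gen t)) +
    (if x (Link (j - 1) t) then vaoi_nat pol x (j - 1) t else vaoi_nat pol x j t)"
  using assms vstate_version_le_source[of pol x t j] vstate_version_le_source[of pol x t "j - 1"]
  by (auto simp: vaoi_nat_def Let_def)

lemma vaoi_nat_node1_Suc:
  "vaoi_nat pol x 1 (Suc t) = of_bool (x (Gen t)) +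
    (if policy_action pol x t (vaoi_nat pol x 1 t) \<and> x (Link 0 t) then 0 else vaoi_nat pol x 1 t)"
  using vstate_version_le_source[of pol x t 1] vstate_node_0[of pol x t]
  by (auto simp: vaoi_nat_def Let_def)

lemma vaoi_nat_Threshold_Suc:
  "vaoi_nat (Threshold T) x 1 (Suc t) = of_bool (x (Gen t)) +
    (if T \<le> vaoi_nat (Threshold T) x 1 t \<and> x (Link 0 t) then 0 else vaoi_nat (Threshold T) x 1 t)"
  using vaoi_nat_node1_Suc[of "Threshold T" x t] by simp

lemma threshold_step_identities:
  fixes n T :: nat and g l :: bool
  assumes T: "1 \<le> T"
  defines "d \<equiv> real n" and "d' \<equiv> real (of_bool g + (if T \<le> n \<and> l then 0 else n))"
    and "r \<equiv> of_bool (real T \<le> real n) :: real"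
  shows "min d' (real T) = min d (real T) + (1 - r) * of_bool g + (- (r * real T)) * of_bool l
      + r * of_bool g * of_bool l"
    and "(min d' (real T))\<^sup>2 = (min d (real T))\<^sup>2 + (2 * min d (real T) - 2 * real T * r + 1 - r) * of_bool g
      + (- (r * (real T)\<^sup>2)) * of_bool l + r * of_bool g * of_bool l"
    and "d' - min d' (real T) = (d - min d (real T)) + r * of_bool g + (- (d - min d (real T))) * of_bool l
      + (- r) * of_bool g * of_bool l"
  using T unfolding d_def d'_def r_def
  by (cases g; cases l; cases "T \<le> n"; auto simp: min_def power2_eq_square algebra_simps)+


section \<open>Independent Bernoulli families\<close>

lemma (in prob_space) abs_integral_le_bound:
  fixes W :: "'a \<Rightarrow> real"
  assumes "integrable M W" "\<And>\<omega>. \<omega> \<in> space M \<Longrightarrow> 0 \<le> W \<omega> \<and> W \<omega> \<le> B"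
  shows "\<bar>integral\<^sup>L M W\<bar> \<le> B"
proof -
  have "0 \<le> integral\<^sup>L M W"
    using assms(2) by (intro Bochner_Integration.integral_nonneg) auto
  moreover have "integral\<^sup>L M W \<le> integral\<^sup>L M (\<lambda>_. B)"
    using assms by (intro Bochner_Integration.integral_mono) auto
  ultimately show ?thesis
    by (simp add: prob_space)
qed

locale indep_bool_family = prob_space M for M :: "'w measure" +
  fixes X :: "'i \<Rightarrow> 'w \<Rightarrow> bool"
  assumes indep: "indep_vars (\<lambda>_. count_space UNIV) X UNIV"
begin

definition prob_true :: "'i \<Rightarrow> real" where
  "prob_true i = prob {\<omega> \<in> space M. X i \<omega>}"

definition cylinder :: "'i set \<Rightarrow> ('i \<Rightarrow> bool) \<Rightarrow> 'w set" where
  "cylinder S v = {\<omega> \<in> space M. \<forall>i\<in>S. X i \<omega> = v i}"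

lemma sets_X_eq: "{\<omega> \<in> space M. X i \<omega> = b} \<in> events"
proof -
  have "random_variable (count_space UNIV) (X i)"
    using indep unfolding indep_vars_def2 by auto
  then have "X i -` {b} \<inter> space M \<in> events"
    by (rule measurable_sets) auto
  then show ?thesis
    by (simp add: vimage_def Int_def conj_commute)
qed

lemma sets_cylinder: "finite S \<Longrightarrow> cylinder S v \<in> events"
proof -
  assume "finite S"
  have "cylinder S v = space M \<inter> (\<Inter>i\<in>S. {\<omega> \<in> space M. X i \<omega> = v i})"
    unfolding cylinder_def by auto
  also have "\<dots> \<in> events"
    using \<open>finite S\<close> sets_X_eq by auto
  finally show ?thesis .
qed

lemma prob_cylinder:
  assumes "finite S"
  shows "prob (cylinder S v) = (\<Prod>i\<in>S. prob {\<omega> \<in> space M. X i \<omega> = v i})"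
proof (cases "S = {}")
  case True
  then show ?thesis by (simp add: cylinder_def prob_space)
next
  case False
  have "indep_sets (\<lambda>i. {X i -` A \<inter> space M | A. A \<in> sets (count_space UNIV)}) UNIV"
    using indep unfolding indep_vars_def2 by auto
  moreover have "cylinder S v = (\<Inter>i\<in>S. X i -` {v i} \<inter> space M)"
    unfolding cylinder_def using False by auto
  ultimately have "prob (cylinder S v) = (\<Prod>i\<in>S. prob (X i -` {v i} \<inter> space M))"
    using indep_setsD[of _ UNIV S "\<lambda>i. X i -` {v i} \<inter> space M"] False assms by auto
  also have "\<dots> = (\<Prod>i\<in>S. prob {\<omega> \<in> space M. X i \<omega> = v i})"
    by (intro prod.cong refl arg_cong[where f = prob]) auto
  finally show ?thesis .
qed

definition determined_by :: "'i set \<Rightarrow> ('w \<Rightarrow> real) \<Rightarrow> bool" where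
  "determined_by S W \<longleftrightarrow> (\<exists>F. \<forall>\<omega>\<in>space M. W \<omega> = F (restrict (\<lambda>i. X i \<omega>) S))"

lemma determined_by_mono: "determined_by S W \<Longrightarrow> S \<subseteq> S' \<Longrightarrow> determined_by S' W"
  unfolding determined_by_def
proof clarify
  fix F assume "\<forall>\<omega>\<in>space M. W \<omega> = F (restrict (\<lambda>i. X i \<omega>) S)" and "S \<subseteq> S'"
  then show "\<exists>G. \<forall>\<omega>\<in>space M. W \<omega> = G (restrict (\<lambda>i. X i \<omega>) S')"
    by (intro exI[of _ "\<lambda>v. F (restrict v S)"]) (auto simp: restrict_restrict Int_absorb1)
qed

lemma determined_by_X: "i \<in> S \<Longrightarrow> determined_by S (\<lambda>\<omega>. f (X i \<omega>))"
  unfolding determined_by_def by (intro exI[of _ "\<lambda>v. f (v i)"]) auto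

lemma determined_by_const: "determined_by S (\<lambda>\<omega>. c)"
  unfolding determined_by_def by auto

lemma determined_by_compose2:
  assumes "determined_by S W1" "determined_by S W2"
  shows "determined_by S (\<lambda>\<omega>. f (W1 \<omega>) (W2 \<omega>))"
proof -
  obtain F1 F2 where "\<forall>\<omega>\<in>space M. W1 \<omega> = F1 (restrict (\<lambda>i. X i \<omega>) S)"
    and "\<forall>\<omega>\<in>space M. W2 \<omega> = F2 (restrict (\<lambda>i. X i \<omega>) S)"
    using assms unfolding determined_by_def by blast
  then show ?thesis
    unfolding determined_by_def by (intro exI[of _ "\<lambda>v. f (F1 v) (F2 v)"]) auto
qed

lemma determined_by_compose: "determined_by S W \<Longrightarrow> determined_by S (\<lambda>\<omega>. f (W \<omega>))"
  using determined_by_compose2[of S W W "\<lambda>a b. f a"] by simp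

lemma sum_cylinders_eq:
  fixes F :: "('i \<Rightarrow> bool) \<Rightarrow> real"
  assumes "finite S" "\<omega> \<in> space M"
  shows "(\<Sum>v\<in>Pi\<^sub>E S (\<lambda>_. UNIV). F v * indicator (cylinder S v) \<omega>) = F (restrict (\<lambda>i. X i \<omega>) S)"
proof -
  have "\<omega> \<in> cylinder S v \<longleftrightarrow> v = restrict (\<lambda>i. X i \<omega>) S" if "v \<in> Pi\<^sub>E S (\<lambda>_. UNIV)" for v
    using that assms(2) by (auto simp: cylinder_def fun_eq_iff PiE_def extensional_def)
  then have "(\<Sum>v\<in>Pi\<^sub>E S (\<lambda>_. UNIV). F v * indicator (cylinder S v) \<omega>) =
      (\<Sum>v\<in>Pi\<^sub>E S (\<lambda>_. UNIV). if v = restrict (\<lambda>i. X i \<omega>) S then F v else 0)"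
    by (intro sum.cong) auto
  also have "\<dots> = F (restrict (\<lambda>i. X i \<omega>) S)"
    using assms(1) by (simp add: finite_PiE)
  finally show ?thesis .
qed

lemma integral_sum_indicator:
  assumes "finite I" "\<And>v. v \<in> I \<Longrightarrow> A v \<in> events"
  shows "integrable M (\<lambda>\<omega>. \<Sum>v\<in>I. c v * indicator (A v) \<omega>)"
    and "integral\<^sup>L M (\<lambda>\<omega>. \<Sum>v\<in>I. c v * indicator (A v) \<omega>) = (\<Sum>v\<in>I. c v * prob (A v))"
proof -
  have integrable: "integrable M (\<lambda>\<omega>. c v * indicator (A v) \<omega>)" if "v \<in> I" for v
    using assms(2)[OF that] by (intro integrable_mult_right integrable_real_indicator)
      (auto simp: less_top[symmetric])
  then show "integrable M (\<lambda>\<omega>. \<Sum>v\<in>I. c v * indicator (A v) \<omega>)"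
    by (rule Bochner_Integration.integrable_sum)
  have "integral\<^sup>L M (\<lambda>\<omega>. \<Sum>v\<in>I. c v * indicator (A v) \<omega>) =
      (\<Sum>v\<in>I. integral\<^sup>L M (\<lambda>\<omega>. c v * indicator (A v) \<omega>))"
    using integrable by (rule Bochner_Integration.integral_sum)
  also have "\<dots> = (\<Sum>v\<in>I. c v * prob (A v))"
    using assms(2) by (intro sum.cong refl) simp
  finally show "integral\<^sup>L M (\<lambda>\<omega>. \<Sum>v\<in>I. c v * indicator (A v) \<omega>) = (\<Sum>v\<in>I. c v * prob (A v))" .
qed

lemma
  fixes F :: "('i \<Rightarrow> bool) \<Rightarrow> real"
  assumes S: "finite S" and W: "\<And>\<omega>. \<omega> \<in> space M \<Longrightarrow> W \<omega> = F (restrict (\<lambda>i. X i \<omega>) S)"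
  shows integrable_cylinder_sum: "integrable M W"
    and integral_cylinder_sum: "integral\<^sup>L M W = (\<Sum>v\<in>Pi\<^sub>E S (\<lambda>_. UNIV). F v * prob (cylinder S v))"
proof -
  have eq: "\<And>\<omega>. \<omega> \<in> space M \<Longrightarrow>
      W \<omega> = (\<Sum>v\<in>Pi\<^sub>E S (\<lambda>_. UNIV). F v * indicator (cylinder S v) \<omega>)"
    using sum_cylinders_eq[OF S] W by simp
  have fin: "finite (Pi\<^sub>E S (\<lambda>_. UNIV :: bool set))" and cyl: "cylinder S v \<in> events" for v
    using S by (simp_all add: finite_PiE sets_cylinder)
  note sums = integral_sum_indicator[of _ "cylinder S" F, OF fin cyl]
  show "integrable M W"
  proof (rule Bochner_Integration.integrable_cong[THEN iffD2, OF refl _ sums(1)])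
    show "W \<omega> = (\<Sum>v\<in>Pi\<^sub>E S (\<lambda>_. UNIV). F v * indicator (cylinder S v) \<omega>)"
      if "\<omega> \<in> space M" for \<omega>
      using that by (rule eq)
  qed
  show "integral\<^sup>L M W = (\<Sum>v\<in>Pi\<^sub>E S (\<lambda>_. UNIV). F v * prob (cylinder S v))"
  proof -
    have "integral\<^sup>L M W = integral\<^sup>L M (\<lambda>\<omega>. \<Sum>v\<in>Pi\<^sub>E S (\<lambda>_. UNIV). F v * indicator (cylinder S v) \<omega>)"
      by (rule Bochner_Integration.integral_cong[OF refl eq])
    with sums(2) show ?thesis by simp
  qed
qed

lemma integrable_determined_by: "finite S \<Longrightarrow> determined_by S W \<Longrightarrow> integrable M W"
  unfolding determined_by_def using integrable_cylinder_sum by blast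

lemma integral_mult_indep_indicator:
  assumes S: "finite S" and j: "j \<notin> S" and W: "determined_by S W"
  shows "integral\<^sup>L M (\<lambda>\<omega>. W \<omega> * of_bool (X j \<omega>)) = integral\<^sup>L M W * prob_true j"
proof -
  obtain F where F: "\<And>\<omega>. \<omega> \<in> space M \<Longrightarrow> W \<omega> = F (restrict (\<lambda>i. X i \<omega>) S)"
    using W unfolding determined_by_def by blast
  let ?C = "\<lambda>v. cylinder (insert j S) (v(j := True))"
  have prob_C: "prob (?C v) = prob (cylinder S v) * prob_true j" for v
  proof -
    have "prob (?C v) = (\<Prod>i\<in>insert j S. prob {\<omega> \<in> space M. X i \<omega> = (v(j := True)) i})"
      using S by (intro prob_cylinder) simp
    also have "\<dots> = prob_true j * (\<Prod>i\<in>S. prob {\<omega> \<in> space M. X i \<omega> = v i})"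
      using S j by (simp add: prob_true_def) (auto intro!: prod.cong)
    finally show ?thesis
      using prob_cylinder[OF S] by simp
  qed
  have pointwise: "W \<omega> * of_bool (X j \<omega>) = (\<Sum>v\<in>Pi\<^sub>E S (\<lambda>_. UNIV). F v * indicator (?C v) \<omega>)"
    if "\<omega> \<in> space M" for \<omega>
  proof -
    have "indicator (?C v) \<omega> = indicator (cylinder S v) \<omega> * (of_bool (X j \<omega>) :: real)" for v
      using that j by (auto simp: cylinder_def indicator_def)
    then show ?thesis
      using F[OF that] sum_cylinders_eq[OF S that, of F] by (simp add: sum_distrib_right mult.assoc)
  qed
  have "integral\<^sup>L M (\<lambda>\<omega>. W \<omega> * of_bool (X j \<omega>)) =
      integral\<^sup>L M (\<lambda>\<omega>. \<Sum>v\<in>Pi\<^sub>E S (\<lambda>_. UNIV). F v * indicator (?C v) \<omega>)"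
    by (rule Bochner_Integration.integral_cong[OF refl pointwise])
  also have "\<dots> = (\<Sum>v\<in>Pi\<^sub>E S (\<lambda>_. UNIV). F v * prob (?C v))"
    using S by (intro integral_sum_indicator(2)) (simp_all add: finite_PiE sets_cylinder)
  also have "\<dots> = (\<Sum>v\<in>Pi\<^sub>E S (\<lambda>_. UNIV). F v * (prob (cylinder S v) * prob_true j))"
    using prob_C by simp
  also have "(\<Sum>v\<in>Pi\<^sub>E S (\<lambda>_. UNIV). F v * (prob (cylinder S v) * prob_true j)) =
      integral\<^sup>L M W * prob_true j"
    using integral_cylinder_sum[where F = F, OF S F] by (simp add: sum_distrib_right mult.assoc)
  finally show ?thesis .
qed

lemma integral_two_fresh_indicators:
  assumes S: "finite S" "j \<notin> S" "k \<notin> S" "j \<noteq> k"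
    and W: "determined_by S W1" "determined_by S W2" "determined_by S W3" "determined_by S W4"
  shows "integral\<^sup>L M (\<lambda>\<omega>. W1 \<omega> + W2 \<omega> * of_bool (X j \<omega>) + W3 \<omega> * of_bool (X k \<omega>)
      + W4 \<omega> * of_bool (X j \<omega>) * of_bool (X k \<omega>)) =
    integral\<^sup>L M W1 + prob_true j * integral\<^sup>L M W2 + prob_true k * integral\<^sup>L M W3
      + prob_true j * prob_true k * integral\<^sup>L M W4"
proof -
  let ?x = "\<lambda>i \<omega>. of_bool (X i \<omega>) :: real"
  define S' where "S' = insert k (insert j S)"
  have S': "finite S'" "S \<subseteq> S'" "j \<in> S'" "k \<in> S'"
    using S by (auto simp: S'_def)
  have W': "determined_by S' W" if "determined_by S W" for W
    using that S'(2) by (rule determined_by_mono)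
  have x: "determined_by S' (?x j)" "determined_by S' (?x k)"
    using S' by (auto intro: determined_by_X)
  have W4j: "determined_by (insert j S) (\<lambda>\<omega>. W4 \<omega> * ?x j \<omega>)"
    by (rule determined_by_compose2[OF determined_by_mono[OF W(4)] determined_by_X]) auto
  have "integrable M W1" "integrable M (\<lambda>\<omega>. W2 \<omega> * ?x j \<omega>)" "integrable M (\<lambda>\<omega>. W3 \<omega> * ?x k \<omega>)"
      "integrable M (\<lambda>\<omega>. W4 \<omega> * ?x j \<omega> * ?x k \<omega>)"
    using W'[OF W(1)] determined_by_compose2[OF W'[OF W(2)] x(1)]
      determined_by_compose2[OF W'[OF W(3)] x(2)]
      determined_by_compose2[OF determined_by_compose2[OF W'[OF W(4)] x(1)] x(2)]
    by (simp_all add: integrable_determined_by[OF S'(1)])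
  then have "integral\<^sup>L M (\<lambda>\<omega>. W1 \<omega> + W2 \<omega> * ?x j \<omega> + W3 \<omega> * ?x k \<omega> + W4 \<omega> * ?x j \<omega> * ?x k \<omega>) =
      integral\<^sup>L M W1 + integral\<^sup>L M (\<lambda>\<omega>. W2 \<omega> * ?x j \<omega>) + integral\<^sup>L M (\<lambda>\<omega>. W3 \<omega> * ?x k \<omega>)
        + integral\<^sup>L M (\<lambda>\<omega>. W4 \<omega> * ?x j \<omega> * ?x k \<omega>)"
    by simp
  also have "integral\<^sup>L M (\<lambda>\<omega>. W2 \<omega> * ?x j \<omega>) = integral\<^sup>L M W2 * prob_true j"
    using S W(2) by (intro integral_mult_indep_indicator) auto
  also have "integral\<^sup>L M (\<lambda>\<omega>. W3 \<omega> * ?x k \<omega>) = integral\<^sup>L M W3 * prob_true k"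
    using S W(3) by (intro integral_mult_indep_indicator) auto
  also have "integral\<^sup>L M (\<lambda>\<omega>. W4 \<omega> * ?x j \<omega> * ?x k \<omega>) =
      integral\<^sup>L M (\<lambda>\<omega>. W4 \<omega> * ?x j \<omega>) * prob_true k"
    using S W4j by (intro integral_mult_indep_indicator) auto
  also have "integral\<^sup>L M (\<lambda>\<omega>. W4 \<omega> * ?x j \<omega>) = integral\<^sup>L M W4 * prob_true j"
    using S W(4) by (intro integral_mult_indep_indicator) auto
  finally show ?thesis
    by (simp add: algebra_simps)
qed

end


section \<open>Expected VAoI on the line network\<close>

locale line_network = indep_bool_family M X
  for M :: "'w measure" and X :: "idx \<Rightarrow> 'w \<Rightarrow> bool" +
  fixes pg :: real and \<rho> :: "nat \<Rightarrow> real" and N :: nat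
  assumes pg: "0 < pg"
    and prob_Gen: "\<And>t. prob_true (Gen t) = pg"
    and \<rho>: "\<And>i. i \<le> N \<Longrightarrow> 0 < \<rho> i \<and> \<rho> i \<le> 1"
    and prob_Link: "\<And>i t. i \<le> N \<Longrightarrow> prob_true (Link i t) = \<rho> i"
begin

lemma \<rho>0: "0 < \<rho> 0" "\<rho> 0 \<le> 1"
  using \<rho>[of 0] by auto

definition expected_vaoi :: "policy \<Rightarrow> nat \<Rightarrow> nat \<Rightarrow> real" where
  "expected_vaoi pol j t = integral\<^sup>L M (vaoi pol X j t)"

lemma avg_vaoi_eq_cesaro_mean: "avg_vaoi M pol X j = cesaro_mean (expected_vaoi pol j)"
  by (simp add: fun_eq_iff avg_vaoi_def cesaro_mean_def expected_vaoi_def)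

lemma expected_vaoi_0: "expected_vaoi pol j 0 = 0"
proof -
  have "vaoi pol X j 0 = (\<lambda>_. 0)"
    by (simp add: fun_eq_iff vaoi_def)
  then show ?thesis
    by (simp add: expected_vaoi_def)
qed

lemma determined_by_vaoi:
  assumes "j \<le> n"
  shows "determined_by (history t n) (vaoi pol X j t)"
  unfolding determined_by_def
proof (intro exI[of _ "\<lambda>v. real (vaoi_nat pol v j t)"] ballI)
  fix \<omega>
  have "vaoi_nat pol (\<lambda>i. X i \<omega>) j t = vaoi_nat pol (restrict (\<lambda>i. X i \<omega>) (history t n)) j t"
    using assms by (intro vaoi_nat_cong_history) auto
  then show "vaoi pol X j t \<omega> = real (vaoi_nat pol (restrict (\<lambda>i. X i \<omega>) (history t n)) j t)"
    by (simp add: vaoi_eq_vaoi_nat)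
qed

lemma integrable_vaoi: "integrable M (vaoi pol X j t)"
  by (rule integrable_determined_by[OF finite_history determined_by_vaoi[OF order_refl]])

lemma integral_next_slot:
  assumes S: "finite S" "Gen t \<notin> S" "Link i t \<notin> S" and i: "i \<le> N"
    and W: "determined_by S W1" "determined_by S W2" "determined_by S W3" "determined_by S W4"
    and V: "\<And>\<omega>. \<omega> \<in> space M \<Longrightarrow> V \<omega> = W1 \<omega> + W2 \<omega> * of_bool (X (Gen t) \<omega>)
      + W3 \<omega> * of_bool (X (Link i t) \<omega>) + W4 \<omega> * of_bool (X (Gen t) \<omega>) * of_bool (X (Link i t) \<omega>)"
  shows "integral\<^sup>L M V = integral\<^sup>L M W1 + pg * integral\<^sup>L M W2 + \<rho> i * integral\<^sup>L M W3
    + pg * \<rho> i * integral\<^sup>L M W4"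
proof -
  have "integral\<^sup>L M V = integral\<^sup>L M (\<lambda>\<omega>. W1 \<omega> + W2 \<omega> * of_bool (X (Gen t) \<omega>)
      + W3 \<omega> * of_bool (X (Link i t) \<omega>) + W4 \<omega> * of_bool (X (Gen t) \<omega>) * of_bool (X (Link i t) \<omega>))"
    by (rule Bochner_Integration.integral_cong[OF refl V])
  also have "\<dots> = integral\<^sup>L M W1 + prob_true (Gen t) * integral\<^sup>L M W2
      + prob_true (Link i t) * integral\<^sup>L M W3 + prob_true (Gen t) * prob_true (Link i t) * integral\<^sup>L M W4"
    using S W by (intro integral_two_fresh_indicators) auto
  finally show ?thesis
    using i by (simp add: prob_Gen prob_Link)
qed

lemma expected_vaoi_relay_Suc:
  assumes i: "i \<in> {1..N}"
  shows "expected_vaoi pol (Suc i) (Suc t) =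
    (1 - \<rho> i) * expected_vaoi pol (Suc i) t + (\<rho> i * expected_vaoi pol i t + pg)"
proof -
  have V: "determined_by (history t (Suc i)) (vaoi pol X (Suc i) t)"
      "determined_by (history t (Suc i)) (vaoi pol X i t)"
    by (auto intro: determined_by_vaoi)
  have "expected_vaoi pol (Suc i) (Suc t) = expected_vaoi pol (Suc i) t + pg * integral\<^sup>L M (\<lambda>_. 1)
      + \<rho> i * integral\<^sup>L M (\<lambda>\<omega>. vaoi pol X i t \<omega> - vaoi pol X (Suc i) t \<omega>) + pg * \<rho> i * integral\<^sup>L M (\<lambda>_. 0)"
    unfolding expected_vaoi_def
    by (rule integral_next_slot[OF finite_history history_notin(1,3) _ V(1) determined_by_const
          determined_by_compose2[OF V(2) V(1)] determined_by_const])
      (use i in \<open>auto simp: vaoi_eq_vaoi_nat vaoi_nat_relay_Suc of_bool_def\<close>)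
  then show ?thesis
    by (simp add: expected_vaoi_def integrable_vaoi prob_space algebra_simps)
qed

lemma cesaro_expected_vaoi_relay:
  assumes L: "cesaro_mean (expected_vaoi pol 1) \<longlonglongrightarrow> L" and n: "n \<le> N"
  shows "cesaro_mean (expected_vaoi pol (Suc n)) \<longlonglongrightarrow> L + pg * (\<Sum>i = 1..n. 1 / \<rho> i)"
  using n
proof (induction n)
  case 0
  then show ?case using L by simp
next
  case (Suc n)
  have \<rho>: "0 < \<rho> (Suc n)" "\<rho> (Suc n) \<le> 1"
    using \<rho> Suc.prems by auto
  have step: "expected_vaoi pol (Suc (Suc n)) (Suc t) = (1 - \<rho> (Suc n)) *
      expected_vaoi pol (Suc (Suc n)) t + (\<rho> (Suc n) * expected_vaoi pol (Suc n) t + pg)" for t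
    using expected_vaoi_relay_Suc Suc.prems by simp
  have "cesaro_mean (expected_vaoi pol (Suc (Suc n))) \<longlonglongrightarrow>
      (\<rho> (Suc n) * (L + pg * (\<Sum>i = 1..n. 1 / \<rho> i)) + pg) / (1 - (1 - \<rho> (Suc n)))"
    using \<rho> Suc by (intro cesaro_mean_linear_recurrence[OF _ _ expected_vaoi_0 step]
        tendsto_cesaro_mean_affine) auto
  moreover have "(\<rho> (Suc n) * (L + pg * (\<Sum>i = 1..n. 1 / \<rho> i)) + pg) / (1 - (1 - \<rho> (Suc n))) =
      L + pg * (\<Sum>i = 1..Suc n. 1 / \<rho> i)"
    using \<rho> by (simp add: field_simps)
  ultimately show ?case by simp
qed

definition sends :: "policy \<Rightarrow> nat \<Rightarrow> 'w \<Rightarrow> real" where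
  "sends pol t \<omega> = of_bool (policy_action pol (\<lambda>i. X i \<omega>) t (vaoi_nat pol (\<lambda>i. X i \<omega>) 1 t))"

lemma determined_by_sends: "determined_by (insert (Coin t) (history t 1)) (sends pol t)"
  unfolding determined_by_def
proof (intro exI[of _ "\<lambda>v. of_bool (policy_action pol v t (vaoi_nat pol v 1 t))"] ballI)
  fix \<omega>
  let ?S = "insert (Coin t) (history t 1)" and ?x = "\<lambda>i. X i \<omega>"
  have "vaoi_nat pol ?x 1 t = vaoi_nat pol (restrict ?x ?S) 1 t"
    by (rule vaoi_nat_cong_history) auto
  moreover have "policy_action pol ?x t d = policy_action pol (restrict ?x ?S) t d" for d
    by (rule policy_action_cong) auto
  ultimately show "sends pol t \<omega> = of_bool (policy_action pol (restrict ?x ?S) t (vaoi_nat pol (restrict ?x ?S) 1 t))"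
    unfolding sends_def by simp
qed

lemma expected_vaoi_node1_Suc:
  "expected_vaoi pol 1 (Suc t) =
    expected_vaoi pol 1 t + pg - \<rho> 0 * integral\<^sup>L M (\<lambda>\<omega>. sends pol t \<omega> * vaoi pol X 1 t \<omega>)"
proof -
  let ?S = "insert (Coin t) (history t 1)"
  have V: "determined_by ?S (vaoi pol X 1 t)"
    by (rule determined_by_mono[OF determined_by_vaoi]) auto
  have "vaoi pol X 1 (Suc t) \<omega> = vaoi pol X 1 t \<omega> + 1 * of_bool (X (Gen t) \<omega>)
      + (- (sends pol t \<omega> * vaoi pol X 1 t \<omega>)) * of_bool (X (Link 0 t) \<omega>)
      + 0 * of_bool (X (Gen t) \<omega>) * of_bool (X (Link 0 t) \<omega>)" for \<omega>
    using vaoi_nat_node1_Suc[of pol "\<lambda>i. X i \<omega>" t] by (simp add: vaoi_eq_vaoi_nat sends_def)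
  then have "expected_vaoi pol 1 (Suc t) = expected_vaoi pol 1 t + pg * integral\<^sup>L M (\<lambda>_. 1)
      + \<rho> 0 * integral\<^sup>L M (\<lambda>\<omega>. - (sends pol t \<omega> * vaoi pol X 1 t \<omega>)) + pg * \<rho> 0 * integral\<^sup>L M (\<lambda>_. 0)"
    unfolding expected_vaoi_def
    by (intro integral_next_slot[where t = t and i = 0, OF _ _ _ _ V determined_by_const
          determined_by_compose[OF determined_by_compose2[OF determined_by_sends V]] determined_by_const])
      (simp_all add: finite_history history_notin)
  then show ?thesis
    by (simp add: expected_vaoi_def prob_space)
qed

lemma cesaro_expected_vaoi_node1_proportional:
  assumes \<alpha>: "0 < \<alpha>" "\<alpha> \<le> 1"
    and sends: "\<And>t. integral\<^sup>L M (\<lambda>\<omega>. sends pol t \<omega> * vaoi pol X 1 t \<omega>) = \<alpha> * expected_vaoi pol 1 t"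
  shows "cesaro_mean (expected_vaoi pol 1) \<longlonglongrightarrow> pg / (\<rho> 0 * \<alpha>)"
proof -
  have step: "expected_vaoi pol 1 (Suc t) = (1 - \<rho> 0 * \<alpha>) * expected_vaoi pol 1 t + pg" for t
    using expected_vaoi_node1_Suc[of pol t] sends[of t] by (simp add: algebra_simps)
  have "0 \<le> 1 - \<rho> 0 * \<alpha>" "1 - \<rho> 0 * \<alpha> < 1"
    using \<rho>0 \<alpha> by (auto simp: mult_le_one)
  then have "cesaro_mean (expected_vaoi pol 1) \<longlonglongrightarrow> pg / (1 - (1 - \<rho> 0 * \<alpha>))"
    by (rule cesaro_mean_linear_recurrence[OF _ _ expected_vaoi_0 step cesaro_mean_const])
  then show ?thesis by simp
qed

lemma cesaro_expected_vaoi_node1_RandStat: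
  assumes \<alpha>: "0 < \<alpha>" "\<alpha> \<le> 1" "\<And>t. prob_true (Coin t) = \<alpha>"
  shows "cesaro_mean (expected_vaoi (RandStat \<alpha>) 1) \<longlonglongrightarrow> pg / (\<rho> 0 * \<alpha>)"
proof (rule cesaro_expected_vaoi_node1_proportional[OF \<alpha>(1,2)])
  fix t
  have "integral\<^sup>L M (\<lambda>\<omega>. sends (RandStat \<alpha>) t \<omega> * vaoi (RandStat \<alpha>) X 1 t \<omega>) =
      integral\<^sup>L M (\<lambda>\<omega>. vaoi (RandStat \<alpha>) X 1 t \<omega> * of_bool (X (Coin t) \<omega>))"
    by (simp add: sends_def mult.commute)
  also have "\<dots> = expected_vaoi (RandStat \<alpha>) 1 t * prob_true (Coin t)"
    unfolding expected_vaoi_def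
    by (rule integral_mult_indep_indicator[OF finite_history history_notin(2) determined_by_vaoi[of 1 1]]) simp
  finally show "integral\<^sup>L M (\<lambda>\<omega>. sends (RandStat \<alpha>) t \<omega> * vaoi (RandStat \<alpha>) X 1 t \<omega>) =
      \<alpha> * expected_vaoi (RandStat \<alpha>) 1 t"
    using \<alpha>(3) by simp
qed

lemma cesaro_expected_vaoi_node1_Threshold_0:
  "cesaro_mean (expected_vaoi (Threshold 0) 1) \<longlonglongrightarrow> pg / \<rho> 0"
  using cesaro_expected_vaoi_node1_proportional[of 1 "Threshold 0"]
  by (simp add: sends_def expected_vaoi_def)

lemma convergent_cesaro_expected_vaoi_node1_Uniform:
  assumes "1 \<le> D"
  shows "\<exists>L. cesaro_mean (expected_vaoi (Uniform D) 1) \<longlonglongrightarrow> L"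
proof (rule convergent_cesaro_mean_periodic_reset[OF assms])
  show "expected_vaoi (Uniform D) 1 (Suc t) =
      pg + (if t mod D = 0 then 1 - \<rho> 0 else 1) * expected_vaoi (Uniform D) 1 t" for t
    using expected_vaoi_node1_Suc[of "Uniform D" t]
    by (cases "t mod D = 0") (simp_all add: sends_def expected_vaoi_def algebra_simps)
qed (use \<rho>0 pg expected_vaoi_0 in auto)

definition capped_vaoi :: "nat \<Rightarrow> nat \<Rightarrow> 'w \<Rightarrow> real" where
  "capped_vaoi T t \<omega> = min (vaoi (Threshold T) X 1 t \<omega>) (real T)"

definition above_threshold :: "nat \<Rightarrow> nat \<Rightarrow> 'w \<Rightarrow> real" where
  "above_threshold T t \<omega> = of_bool (real T \<le> vaoi (Threshold T) X 1 t \<omega>)"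

lemma determined_by_threshold:
  fixes f :: "real \<Rightarrow> real \<Rightarrow> real \<Rightarrow> real"
  shows "determined_by (history t 1)
    (\<lambda>\<omega>. f (vaoi (Threshold T) X 1 t \<omega>) (capped_vaoi T t \<omega>) (above_threshold T t \<omega>))"
  using determined_by_compose[OF determined_by_vaoi[where j = 1 and n = 1 and t = t and pol = "Threshold T"],
      of "\<lambda>d. f d (min d (real T)) (of_bool (real T \<le> d))"]
  by (simp add: capped_vaoi_def above_threshold_def)

lemma integrable_threshold:
  fixes f :: "real \<Rightarrow> real \<Rightarrow> real \<Rightarrow> real"
  shows "integrable M (\<lambda>\<omega>. f (vaoi (Threshold T) X 1 t \<omega>) (capped_vaoi T t \<omega>) (above_threshold T t \<omega>))"
  by (rule integrable_determined_by[OF finite_history determined_by_threshold[where f = f and T = T]])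

lemma
  assumes "1 \<le> T"
  shows capped_vaoi_Suc: "capped_vaoi T (Suc t) \<omega> = capped_vaoi T t \<omega>
      + (1 - above_threshold T t \<omega>) * of_bool (X (Gen t) \<omega>)
      + (- (above_threshold T t \<omega> * real T)) * of_bool (X (Link 0 t) \<omega>)
      + above_threshold T t \<omega> * of_bool (X (Gen t) \<omega>) * of_bool (X (Link 0 t) \<omega>)"
    and capped_vaoi_sq_Suc: "(capped_vaoi T (Suc t) \<omega>)\<^sup>2 = (capped_vaoi T t \<omega>)\<^sup>2
      + (2 * capped_vaoi T t \<omega> - 2 * real T * above_threshold T t \<omega> + 1 - above_threshold T t \<omega>)
        * of_bool (X (Gen t) \<omega>)
      + (- (above_threshold T t \<omega> * (real T)\<^sup>2)) * of_bool (X (Link 0 t) \<omega>)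
      + above_threshold T t \<omega> * of_bool (X (Gen t) \<omega>) * of_bool (X (Link 0 t) \<omega>)"
    and excess_vaoi_Suc: "vaoi (Threshold T) X 1 (Suc t) \<omega> - capped_vaoi T (Suc t) \<omega> =
      (vaoi (Threshold T) X 1 t \<omega> - capped_vaoi T t \<omega>) + above_threshold T t \<omega> * of_bool (X (Gen t) \<omega>)
      + (- (vaoi (Threshold T) X 1 t \<omega> - capped_vaoi T t \<omega>)) * of_bool (X (Link 0 t) \<omega>)
      + (- above_threshold T t \<omega>) * of_bool (X (Gen t) \<omega>) * of_bool (X (Link 0 t) \<omega>)"
  unfolding capped_vaoi_def above_threshold_def vaoi_eq_vaoi_nat vaoi_nat_Threshold_Suc
  by (rule threshold_step_identities[OF assms])+

lemma expected_capped_vaoi_Suc: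
  assumes T: "1 \<le> T"
  shows "integral\<^sup>L M (capped_vaoi T (Suc t)) = integral\<^sup>L M (capped_vaoi T t) + pg
    + (pg * \<rho> 0 - pg - \<rho> 0 * real T) * integral\<^sup>L M (above_threshold T t)"
proof -
  have "integral\<^sup>L M (capped_vaoi T (Suc t)) = integral\<^sup>L M (capped_vaoi T t)
      + pg * integral\<^sup>L M (\<lambda>\<omega>. 1 - above_threshold T t \<omega>)
      + \<rho> 0 * integral\<^sup>L M (\<lambda>\<omega>. - (above_threshold T t \<omega> * real T))
      + pg * \<rho> 0 * integral\<^sup>L M (above_threshold T t)"
    by (rule integral_next_slot[OF finite_history history_notin(1,3) _
          determined_by_threshold[where f = "\<lambda>d y r. y"] determined_by_threshold[where f = "\<lambda>d y r. 1 - r"]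
          determined_by_threshold[where f = "\<lambda>d y r. - (r * real T)"]
          determined_by_threshold[where f = "\<lambda>d y r. r"]])
      (simp_all add: capped_vaoi_Suc[OF T])
  then show ?thesis
    using integrable_threshold[where f = "\<lambda>d y r. r" and T = T and t = t]
    by (simp add: prob_space algebra_simps)
qed

lemma expected_capped_vaoi_sq_Suc:
  assumes T: "1 \<le> T"
  shows "integral\<^sup>L M (\<lambda>\<omega>. (capped_vaoi T (Suc t) \<omega>)\<^sup>2) = integral\<^sup>L M (\<lambda>\<omega>. (capped_vaoi T t \<omega>)\<^sup>2)
    + ((pg * \<rho> 0 - pg - 2 * pg * real T - \<rho> 0 * (real T)\<^sup>2) * integral\<^sup>L M (above_threshold T t) + pg)
    + 2 * pg * integral\<^sup>L M (capped_vaoi T t)"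
proof -
  have "integral\<^sup>L M (\<lambda>\<omega>. (capped_vaoi T (Suc t) \<omega>)\<^sup>2) = integral\<^sup>L M (\<lambda>\<omega>. (capped_vaoi T t \<omega>)\<^sup>2)
      + pg * integral\<^sup>L M (\<lambda>\<omega>. 2 * capped_vaoi T t \<omega> - 2 * real T * above_threshold T t \<omega> + 1
        - above_threshold T t \<omega>)
      + \<rho> 0 * integral\<^sup>L M (\<lambda>\<omega>. - (above_threshold T t \<omega> * (real T)\<^sup>2))
      + pg * \<rho> 0 * integral\<^sup>L M (above_threshold T t)"
    by (rule integral_next_slot[OF finite_history history_notin(1,3) _
          determined_by_threshold[where f = "\<lambda>d y r. y\<^sup>2"]
          determined_by_threshold[where f = "\<lambda>d y r. 2 * y - 2 * real T * r + 1 - r"]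
          determined_by_threshold[where f = "\<lambda>d y r. - (r * (real T)\<^sup>2)"]
          determined_by_threshold[where f = "\<lambda>d y r. r"]])
      (simp_all add: capped_vaoi_sq_Suc[OF T])
  then show ?thesis
    using integrable_threshold[where f = "\<lambda>d y r. r" and T = T and t = t]
      integrable_threshold[where f = "\<lambda>d y r. y" and T = T and t = t]
    by (simp add: prob_space algebra_simps)
qed

lemma expected_excess_vaoi_Suc:
  assumes T: "1 \<le> T"
  shows "expected_vaoi (Threshold T) 1 (Suc t) - integral\<^sup>L M (capped_vaoi T (Suc t)) =
    (1 - \<rho> 0) * (expected_vaoi (Threshold T) 1 t - integral\<^sup>L M (capped_vaoi T t))
    + (1 - \<rho> 0) * pg * integral\<^sup>L M (above_threshold T t)"
proof -
  have excess: "expected_vaoi (Threshold T) 1 t' - integral\<^sup>L M (capped_vaoi T t') =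
      integral\<^sup>L M (\<lambda>\<omega>. vaoi (Threshold T) X 1 t' \<omega> - capped_vaoi T t' \<omega>)" for t'
    using integrable_threshold[where f = "\<lambda>d y r. y" and T = T and t = t']
    by (simp add: expected_vaoi_def integrable_vaoi)
  have "integral\<^sup>L M (\<lambda>\<omega>. vaoi (Threshold T) X 1 (Suc t) \<omega> - capped_vaoi T (Suc t) \<omega>) =
      integral\<^sup>L M (\<lambda>\<omega>. vaoi (Threshold T) X 1 t \<omega> - capped_vaoi T t \<omega>)
      + pg * integral\<^sup>L M (above_threshold T t)
      + \<rho> 0 * integral\<^sup>L M (\<lambda>\<omega>. - (vaoi (Threshold T) X 1 t \<omega> - capped_vaoi T t \<omega>))
      + pg * \<rho> 0 * integral\<^sup>L M (\<lambda>\<omega>. - above_threshold T t \<omega>)"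
    by (rule integral_next_slot[OF finite_history history_notin(1,3) _
          determined_by_threshold[where f = "\<lambda>d y r. d - y"] determined_by_threshold[where f = "\<lambda>d y r. r"]
          determined_by_threshold[where f = "\<lambda>d y r. - (d - y)"]
          determined_by_threshold[where f = "\<lambda>d y r. - r"]])
      (simp, rule excess_vaoi_Suc[OF T])
  then show ?thesis
    unfolding excess by (simp only: Bochner_Integration.integral_minus) (simp add: algebra_simps)
qed

lemma convergent_cesaro_expected_vaoi_node1_Threshold:
  assumes T: "1 \<le> T"
  shows "\<exists>L. cesaro_mean (expected_vaoi (Threshold T) 1) \<longlonglongrightarrow> L"
proof -
  define R where "R t = integral\<^sup>L M (above_threshold T t)" for t
  define eY where "eY t = integral\<^sup>L M (capped_vaoi T t)" for t
  define eY2 where "eY2 t = integral\<^sup>L M (\<lambda>\<omega>. (capped_vaoi T t \<omega>)\<^sup>2)" for t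
  define eZ where "eZ t = expected_vaoi (Threshold T) 1 t - eY t" for t
  define k1 where "k1 = pg * \<rho> 0 - pg - \<rho> 0 * real T"
  define k2 where "k2 = pg * \<rho> 0 - pg - 2 * pg * real T - \<rho> 0 * (real T)\<^sup>2"
  have capped_bounds: "0 \<le> capped_vaoi T t \<omega> \<and> capped_vaoi T t \<omega> \<le> real T" for t \<omega>
    by (simp add: capped_vaoi_def vaoi_eq_vaoi_nat)
  have "\<bar>eY t\<bar> \<le> real T" for t
    unfolding eY_def
    by (rule abs_integral_le_bound[OF integrable_threshold[where f = "\<lambda>d y r. y"]])
      (simp add: capped_bounds)
  moreover have "k1 \<noteq> 0"
  proof -
    have "pg * \<rho> 0 \<le> pg" "0 < \<rho> 0 * real T"
      using pg \<rho>0 T by (simp_all add: mult_left_le)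
    then show ?thesis
      unfolding k1_def by linarith
  qed
  ultimately have R: "cesaro_mean R \<longlonglongrightarrow> - pg / k1"
    by (intro cesaro_mean_tendsto_of_bounded_potential[where w = eY and y = "\<lambda>_. pg"] cesaro_mean_const)
      (auto simp: eY_def R_def k1_def expected_capped_vaoi_Suc[OF T])
  have bound2: "\<bar>eY2 t\<bar> \<le> (real T)\<^sup>2" for t
    unfolding eY2_def
    by (rule abs_integral_le_bound[OF integrable_threshold[where f = "\<lambda>d y r. y\<^sup>2"]])
      (simp add: capped_bounds power_mono)
  have Y: "cesaro_mean eY \<longlonglongrightarrow> - (k2 * (- pg / k1) + pg) / (2 * pg)"
    by (rule cesaro_mean_tendsto_of_bounded_potential[where w = eY2, OF _ _ bound2
          tendsto_cesaro_mean_affine[OF R]])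
      (use pg in \<open>auto simp: eY2_def eY_def R_def k2_def expected_capped_vaoi_sq_Suc[OF T]\<close>)
  have "capped_vaoi T 0 = (\<lambda>_. 0)"
    by (simp add: fun_eq_iff capped_vaoi_def vaoi_def)
  then have Z0: "eZ 0 = 0"
    by (simp add: eZ_def eY_def expected_vaoi_0)
  have Z_step: "eZ (Suc t) = (1 - \<rho> 0) * eZ t + ((1 - \<rho> 0) * pg * R t + 0)" for t
    using expected_excess_vaoi_Suc[OF T, of t] by (simp add: eZ_def eY_def R_def)
  have Z: "cesaro_mean eZ \<longlonglongrightarrow> ((1 - \<rho> 0) * pg * (- pg / k1) + 0) / (1 - (1 - \<rho> 0))"
    by (rule cesaro_mean_linear_recurrence[OF _ _ Z0 Z_step tendsto_cesaro_mean_affine[OF R]])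
      (use \<rho>0 in auto)
  have "cesaro_mean (expected_vaoi (Threshold T) 1) = (\<lambda>n. cesaro_mean eY n + cesaro_mean eZ n)"
    by (simp add: fun_eq_iff eZ_def cesaro_mean_add[symmetric])
  then show ?thesis
    using tendsto_add[OF Y Z] by auto
qed

lemma convergent_cesaro_expected_vaoi_node1:
  assumes "\<forall>\<alpha>. pol = RandStat \<alpha> \<longrightarrow> 0 < \<alpha> \<and> \<alpha> \<le> 1 \<and> (\<forall>t. prob_true (Coin t) = \<alpha>)"
    and "\<forall>D. pol = Uniform D \<longrightarrow> 1 \<le> D"
  shows "\<exists>L. cesaro_mean (expected_vaoi pol 1) \<longlonglongrightarrow> L"
proof (cases pol)
  case (RandStat \<alpha>)
  then show ?thesis
    using assms(1) cesaro_expected_vaoi_node1_RandStat by blast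
next
  case (Uniform D)
  then show ?thesis
    using assms(2) convergent_cesaro_expected_vaoi_node1_Uniform by blast
next
  case (Threshold T)
  then show ?thesis
    using cesaro_expected_vaoi_node1_Threshold_0 convergent_cesaro_expected_vaoi_node1_Threshold
    by (cases "T = 0") auto
qed

end

theorem theorem2:
  fixes M :: "'w measure" and X :: "idx \<Rightarrow> 'w \<Rightarrow> bool"
    and pg :: real and \<rho> :: "nat \<Rightarrow> real" and N :: nat and pol :: policy
  assumes "prob_space M"
    and "prob_space.indep_vars M (\<lambda>_. count_space UNIV) X UNIV"
    and "0 < pg" and "pg < 1"
    and "\<forall>t. measure M {\<omega> \<in> space M. X (Gen t) \<omega>} = pg"
    and "0 < \<rho> 0" and "\<rho> 0 < 1"
    and "\<forall>i\<in>{1..N}. 0 < \<rho> i \<and> \<rho> i \<le> 1"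
    and "\<forall>i\<le>N. \<forall>t. measure M {\<omega> \<in> space M. X (Link i t) \<omega>} = \<rho> i"
    and "\<forall>\<alpha>. pol = RandStat \<alpha> \<longrightarrow>
           0 < \<alpha> \<and> \<alpha> \<le> 1 \<and> (\<forall>t. measure M {\<omega> \<in> space M. X (Coin t) \<omega>} = \<alpha>)"
    and "\<forall>D. pol = Uniform D \<longrightarrow> D \<ge> 1"
  shows "\<exists>L. avg_vaoi M pol X 1 \<longlonglongrightarrow> L \<and>
             avg_vaoi M pol X (N + 1) \<longlonglongrightarrow> L + pg * (\<Sum>i = 1..N. 1 / \<rho> i)"
proof -
  interpret indep_bool_family M X
    using assms(1,2) by (simp add: indep_bool_family_def indep_bool_family_axioms_def)
  interpret line_network M X pg \<rho> N
  proof
    show "0 < \<rho> i \<and> \<rho> i \<le> 1" if "i \<le> N" for i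
      using that assms(6-8) by (cases "i = 0") auto
  qed (use assms(3,5,9) in \<open>simp_all add: prob_true_def\<close>)
  have "\<exists>L. cesaro_mean (expected_vaoi pol 1) \<longlonglongrightarrow> L"
    using assms(10,11) by (intro convergent_cesaro_expected_vaoi_node1) (simp_all add: prob_true_def)
  then obtain L where L: "cesaro_mean (expected_vaoi pol 1) \<longlonglongrightarrow> L" ..
  then show ?thesis
    using cesaro_expected_vaoi_relay[OF L order_refl] by (auto simp: avg_vaoi_eq_cesaro_mean)
qed

end
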